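(* Let $(a_p)_{p\in\mathbb{Z}}$ be a strictly positive rapidly decreasing sequence with $a_p=a_{-p}$ and $(a_p/a_{p+1})$ bounded, and let $H$ be the associated Hilbert completion of $L^*\mathbb{C}^n$. Transport operators on $H$ to $L^{2,*}\mathbb{C}^n$ via the isometry $T:H\to L^{2,*}\mathbb{C}^n$, $Te_p=\sqrt{a_p}\,e_p$. Then the inclusion $L_{\mathrm{pol}}U_n\to\mathrm{GL}_{\mathcal{J}}(L^{2,*}\mathbb{C}^n)$, $\sum_qz^qA_q\mapsto T\big(\sum_qz^q\otimes A_q\big)T^{-1}$, is homotopic (through maps into $\mathrm{GL}_{\mathcal{J}}(L^{2,*}\mathbb{C}^n)$) to the standard inclusion $\sum_qz^qA_q\mapsto\sum_q\zeta_0^q\otimes A_q$, which factors through $LU_n$, where $\zeta_0e_p=e_{p-1}$.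
   Context: $\mathcal{S}^*$ (the dual of rapidly decreasing complex $\mathbb{Z}$-indexed sequences) is identified with $L^*\mathbb{C}$ via Fourier coefficients, with basis $e_p$; $H$ is the completion of $\mathcal{S}^*\otimes\mathbb{C}^n$ for the inner product $\sum_pb^p\overline{c^p}a_p$ tensored with the standard inner product on $\mathbb{C}^n$. On $H$, $z$ acts by $ze_p=e_{p-1}$ and a polynomial loop $\sum_qz^qA_q$ ($A_q\in M_n(\mathbb{C})$) acts by $\sum_qz^q\otimes A_q$. $L^{2,*}\mathbb{C}^n$ is the dual of $L^2\mathbb{C}^n$, identified with $\ell^2(\mathbb{Z})\otimes\mathbb{C}^n$ with orthonormal basis $e_p$. The polarising operator $J$ is $Je_p=-(-1)^{\mathrm{sign}(p)}ie_p$ (tensored with $I_n$); $\mathcal{J}$ is its class modulo Hilbert–Schmidt operators, and $\mathrm{GL}_{\mathcal{J}}$ is the group of invertible bounded operators $A$ with $[A,J]$ Hilbert–Schmidt. *)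

theory Defs
  imports "HOL-Analysis.Analysis"
begin

text \<open>Coordinates: a vector of L^{2,*}C^n = l2(Z) (x) C^n is a function
  v :: int \<times> 'n \<Rightarrow> complex, v(p,i) being the coefficient of e_p (x) eps_i.
  Operators are functions on such coordinate vectors; only their behaviour
  on l2 matters.\<close>

type_synonym 'n vect = "int \<times> 'n \<Rightarrow> complex"
type_synonym 'n oper = "'n vect \<Rightarrow> 'n vect"

definition l2 :: "'n vect set" where
  "l2 = {v. (\<lambda>k. (cmod (v k))\<^sup>2) summable_on UNIV}"

definition l2norm :: "'n vect \<Rightarrow> real" where
  "l2norm v = sqrt (infsum (\<lambda>k. (cmod (v k))\<^sup>2) UNIV)"

definition basisv :: "int \<times> 'n \<Rightarrow> 'n vect" where
  "basisv k = (\<lambda>k'. if k' = k then 1 else 0)"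

definition bounded_op :: "'n oper \<Rightarrow> bool" where
  "bounded_op F \<longleftrightarrow>
     (\<forall>v\<in>l2. F v \<in> l2) \<and>
     (\<forall>u\<in>l2. \<forall>v\<in>l2. F (\<lambda>k. u k + v k) = (\<lambda>k. F u k + F v k)) \<and>
     (\<forall>c. \<forall>v\<in>l2. F (\<lambda>k. c * v k) = (\<lambda>k. c * F v k)) \<and>
     (\<exists>C. \<forall>v\<in>l2. l2norm (F v) \<le> C * l2norm v)"

definition opnorm :: "'n oper \<Rightarrow> real" where
  "opnorm F = Sup {l2norm (F v) | v. v \<in> l2 \<and> l2norm v \<le> 1}"

definition hilbert_schmidt :: "'n oper \<Rightarrow> bool" where
  "hilbert_schmidt F \<longleftrightarrow> (\<lambda>k. (l2norm (F (basisv k)))\<^sup>2) summable_on UNIV"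

definition hsnorm :: "'n oper \<Rightarrow> real" where
  "hsnorm F = sqrt (infsum (\<lambda>k. (l2norm (F (basisv k)))\<^sup>2) UNIV)"

text \<open>Polarising operator: J e_p = -i e_p for p \<ge> 0 and J e_p = i e_p for p < 0
  (i.e. J e_p = -(-1)^{sign p} i e_p with sign p = 0 for p \<ge> 0, 1 for p < 0).\<close>
definition Jop :: "'n oper" where
  "Jop v = (\<lambda>(p, i). (if p \<ge> 0 then - \<i> else \<i>) * v (p, i))"

definition commJ :: "'n oper \<Rightarrow> 'n oper" where
  "commJ F = (\<lambda>v k. F (Jop v) k - Jop (F v) k)"

definition GLJ :: "'n oper set" where
  "GLJ = {F. bounded_op F \<and>
             (\<exists>G. bounded_op G \<and> (\<forall>v\<in>l2. G (F v) = v \<and> F (G v) = v)) \<and>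
             hilbert_schmidt (commJ F)}"

text \<open>Metric defining the topology of GL_J: operator norm plus Hilbert-Schmidt
  norm of the commutator with J.\<close>
definition distJ :: "'n oper \<Rightarrow> 'n oper \<Rightarrow> real" where
  "distJ F G = opnorm (\<lambda>v k. F v k - G v k) + hsnorm (commJ (\<lambda>v k. F v k - G v k))"

definition mat_adj :: "complex^'n^'n \<Rightarrow> complex^'n^'n" where
  "mat_adj M = (\<chi> i j. cnj (M $ j $ i))"

definition unitary_mat :: "complex^'n^'n \<Rightarrow> bool" where
  "unitary_mat M \<longleftrightarrow> M ** mat_adj M = mat 1 \<and> mat_adj M ** M = mat 1"

definition loop_eval :: "(int \<Rightarrow> complex^'n^'n) \<Rightarrow> complex \<Rightarrow> complex^'n^'n" where
  "loop_eval A z = (\<Sum>q\<in>{q. A q \<noteq> 0}. (\<chi> i j. z powi q * A q $ i $ j))"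

definition LpolU :: "(int \<Rightarrow> complex^'n^'n) set" where
  "LpolU = {A. finite {q. A q \<noteq> 0} \<and> (\<forall>z. cmod z = 1 \<longrightarrow> unitary_mat (loop_eval A z))}"

definition LpolU_deg :: "nat \<Rightarrow> (int \<Rightarrow> complex^'n^'n) set" where
  "LpolU_deg N = {A \<in> LpolU. \<forall>q. A q \<noteq> 0 \<longrightarrow> \<bar>q\<bar> \<le> int N}"

text \<open>z^q (x) A with z e_p = e_{p-1}: (z^q (x) A) (e_p (x) w) = e_{p-q} (x) A w.\<close>
definition shift_mat :: "int \<Rightarrow> complex^'n^'n \<Rightarrow> 'n oper" where
  "shift_mat q M v = (\<lambda>(r, i). \<Sum>j\<in>UNIV. M $ i $ j * v (r + q, j))"

definition loop_op :: "(int \<Rightarrow> complex^'n^'n) \<Rightarrow> 'n oper" where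
  "loop_op A v = (\<lambda>k. \<Sum>q\<in>{q. A q \<noteq> 0}. shift_mat q (A q) v k)"

definition Tiso :: "(int \<Rightarrow> real) \<Rightarrow> 'n oper" where
  "Tiso a v = (\<lambda>(p, i). complex_of_real (sqrt (a p)) * v (p, i))"

definition Tiso_inv :: "(int \<Rightarrow> real) \<Rightarrow> 'n oper" where
  "Tiso_inv a v = (\<lambda>(p, i). v (p, i) / complex_of_real (sqrt (a p)))"

definition transported :: "(int \<Rightarrow> real) \<Rightarrow> (int \<Rightarrow> complex^'n^'n) \<Rightarrow> 'n oper" where
  "transported a A = Tiso a \<circ> loop_op A \<circ> Tiso_inv a"

definition rapidly_decreasing :: "(int \<Rightarrow> real) \<Rightarrow> bool" where
  "rapidly_decreasing a \<longleftrightarrow> (\<forall>k::nat. \<exists>C. \<forall>p. \<bar>real_of_int p\<bar> ^ k * \<bar>a p\<bar> \<le> C)"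

end

(*
  Conjugation by T multiplies the entry of z^q (x) A_q between e_r and e_(r+q) by
  sqrt (a_r / a_(r+q)).  Replacing this factor by (a_r / a_(r+q)) powr ((1 - t) / 2) gives a path
  from the transported loop (t = 0) to the standard one (t = 1).  The weights satisfy the cocycle
  identity w(r, q) w(r + q, q') = w(r, q + q'), so the weighted operators compose like the loops
  themselves, and the loop q |-> (A_(-q))^* yields an inverse, because A A^* = 1 on the circle forces
  the convolution of the coefficients to be a delta.  Evenness of a and the bound on a_p / a_(p+1)
  bound the weights of a loop of degree N uniformly in r, and make them uniformly continuous in t.
  The commutator of J with an operator of band width N is supported in the rows |r| <= N, so it is
  Hilbert-Schmidt, with norm controlled by the coefficients; this gives membership in GL_J and
  continuity for distJ.
*)

theory Submission
  imports Defs "HOL-Computational_Algebra.Polynomial"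
begin

section \<open>Square-summable coordinate vectors\<close>

lemma l2norm_nonneg: "0 \<le> l2norm v"
  unfolding l2norm_def by (simp add: infsum_nonneg)

lemma zero_in_l2: "(\<lambda>_. 0) \<in> l2"
  by (simp add: l2_def)

lemma l2norm_zero: "l2norm (\<lambda>_. 0) = 0"
  by (simp add: l2norm_def)

lemma basisv_in_l2: "basisv k \<in> l2"
proof -
  have "(\<lambda>k'. (cmod (basisv k k'))\<^sup>2) summable_on UNIV \<longleftrightarrow> (\<lambda>k'. (cmod (basisv k k'))\<^sup>2) summable_on {k}"
    by (rule summable_on_cong_neutral) (auto simp: basisv_def)
  then show ?thesis by (simp add: l2_def)
qed

lemma l2norm_basisv: "l2norm (basisv k) = 1"
proof -
  have "infsum (\<lambda>k'. (cmod (basisv k k'))\<^sup>2) UNIV = infsum (\<lambda>k'. (cmod (basisv k k'))\<^sup>2) {k}"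
    by (rule infsum_cong_neutral) (auto simp: basisv_def)
  then show ?thesis by (simp add: l2norm_def basisv_def)
qed

lemma hsnorm_nonneg: "0 \<le> hsnorm F"
  unfolding hsnorm_def by (simp add: infsum_nonneg)

lemma sum_sq_le_l2norm_sq:
  assumes "v \<in> l2" and "finite F"
  shows "(\<Sum>k\<in>F. (cmod (v k))\<^sup>2) \<le> (l2norm v)\<^sup>2"
proof -
  have "(\<Sum>k\<in>F. (cmod (v k))\<^sup>2) \<le> infsum (\<lambda>k. (cmod (v k))\<^sup>2) UNIV"
    by (rule finite_sum_le_infsum) (use assms in \<open>auto simp: l2_def\<close>)
  then show ?thesis unfolding l2norm_def by (simp add: infsum_nonneg)
qed

lemma l2I_sum_sq_le:
  assumes sums: "\<And>F. finite F \<Longrightarrow> (\<Sum>k\<in>F. (cmod (v k))\<^sup>2) \<le> B\<^sup>2" and "0 \<le> B"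
  shows "v \<in> l2" and "l2norm v \<le> B"
proof -
  have summable: "(\<lambda>k. (cmod (v k))\<^sup>2) summable_on UNIV"
    by (rule nonneg_bdd_above_summable_on) (use sums in \<open>auto intro!: bdd_aboveI\<close>)
  then show "v \<in> l2" by (simp add: l2_def)
  have "infsum (\<lambda>k. (cmod (v k))\<^sup>2) UNIV \<le> B\<^sup>2"
    by (rule infsum_le_finite_sums[OF summable]) (use sums in auto)
  then show "l2norm v \<le> B"
    unfolding l2norm_def using \<open>0 \<le> B\<close> by (simp add: real_le_lsqrt)
qed

lemma sum_sq_shift_le_l2norm_sq:
  fixes v :: "'n::finite vect" and F :: "(int \<times> 'n) set"
  assumes "v \<in> l2" and "finite F"
  shows "(\<Sum>(r, i)\<in>F. (cmod (v (r + q, j)))\<^sup>2) \<le> real CARD('n) * (l2norm v)\<^sup>2"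
proof -
  have "finite (fst ` F \<times> (UNIV :: 'n set))"
    using assms(2) by simp
  then have "(\<Sum>(r, i)\<in>F. (cmod (v (r + q, j)))\<^sup>2) \<le> (\<Sum>(r, i)\<in>fst ` F \<times> (UNIV :: 'n set). (cmod (v (r + q, j)))\<^sup>2)"
    by (rule sum_mono2) (force simp: image_iff)+
  also have "\<dots> = real CARD('n) * (\<Sum>r\<in>fst ` F. (cmod (v (r + q, j)))\<^sup>2)"
    by (simp add: sum.cartesian_product[symmetric] sum_distrib_left)
  also have "(\<Sum>r\<in>fst ` F. (cmod (v (r + q, j)))\<^sup>2) = (\<Sum>k\<in>(\<lambda>r. (r + q, j)) ` fst ` F. (cmod (v k))\<^sup>2)"
    by (subst sum.reindex) (auto simp: inj_on_def)
  also have "\<dots> \<le> (l2norm v)\<^sup>2"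
    using assms by (intro sum_sq_le_l2norm_sq) auto
  finally show ?thesis by (simp add: mult_left_mono)
qed

section \<open>Band operators\<close>

text \<open>The operator with matrix entry \<open>c q r i j\<close> between the output coordinate \<open>(r, i)\<close> and the
  input coordinate \<open>(r + q, j)\<close>: a loop \<open>\<Sum>q. z^q \<otimes> A q\<close> whose coefficients may also depend on
  the row \<open>r\<close>.\<close>
definition band_op :: "int set \<Rightarrow> (int \<Rightarrow> int \<Rightarrow> 'n \<Rightarrow> 'n \<Rightarrow> complex) \<Rightarrow> 'n::finite oper" where
  "band_op Q c v = (\<lambda>(r, i). \<Sum>q\<in>Q. \<Sum>j\<in>UNIV. c q r i j * v (r + q, j))"

lemma band_op_row_sq_le:
  fixes c :: "int \<Rightarrow> int \<Rightarrow> 'n::finite \<Rightarrow> 'n \<Rightarrow> complex"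
  assumes c_le: "\<And>q r i j. q \<in> Q \<Longrightarrow> cmod (c q r i j) \<le> B"
  shows "(cmod (band_op Q c v (r, i)))\<^sup>2
      \<le> real (card Q) * real CARD('n) * B\<^sup>2 * (\<Sum>(q, j)\<in>Q \<times> UNIV. (cmod (v (r + q, j)))\<^sup>2)"
proof -
  have "cmod (band_op Q c v (r, i)) \<le> (\<Sum>(q, j)\<in>Q \<times> UNIV. cmod (c q r i j * v (r + q, j)))"
    unfolding band_op_def by (simp add: sum.cartesian_product case_prod_beta norm_sum)
  also have "\<dots> \<le> (\<Sum>(q, j)\<in>Q \<times> UNIV. B * cmod (v (r + q, j)))"
    by (rule sum_mono) (auto simp: norm_mult intro!: mult_right_mono c_le)
  finally have "(cmod (band_op Q c v (r, i)))\<^sup>2 \<le> (\<Sum>(q, j)\<in>Q \<times> UNIV. B * cmod (v (r + q, j)))\<^sup>2"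
    by (simp add: power_mono)
  also have "\<dots> \<le> (\<Sum>x\<in>Q \<times> UNIV. ((\<lambda>(q, j). B * cmod (v (r + q, j))) x)\<^sup>2) * card (Q \<times> (UNIV :: 'n set))"
    by (rule sum_squared_le_sum_of_squares)
  also have "\<dots> = real (card Q) * real CARD('n) * B\<^sup>2 * (\<Sum>(q, j)\<in>Q \<times> UNIV. (cmod (v (r + q, j)))\<^sup>2)"
    by (simp add: case_prod_beta power_mult_distrib sum_distrib_left card_cartesian_product mult_ac)
  finally show ?thesis .
qed

lemma band_op_l2:
  fixes c :: "int \<Rightarrow> int \<Rightarrow> 'n::finite \<Rightarrow> 'n \<Rightarrow> complex"
  assumes "finite Q" and c_le: "\<And>q r i j. q \<in> Q \<Longrightarrow> cmod (c q r i j) \<le> B" and "0 \<le> B"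
    and v: "v \<in> l2"
  shows "band_op Q c v \<in> l2"
    and "l2norm (band_op Q c v) \<le> real (card Q) * real CARD('n) * sqrt (real CARD('n)) * B * l2norm v"
proof -
  define m where "m = real (card Q) * real CARD('n)"
  have sums: "(\<Sum>k\<in>F. (cmod (band_op Q c v k))\<^sup>2) \<le> (m * sqrt (real CARD('n)) * B * l2norm v)\<^sup>2"
    if "finite F" for F
  proof -
    have "(\<Sum>k\<in>F. (cmod (band_op Q c v k))\<^sup>2)
        \<le> (\<Sum>(r, i)\<in>F. m * B\<^sup>2 * (\<Sum>(q, j)\<in>Q \<times> UNIV. (cmod (v (r + q, j)))\<^sup>2))"
      by (rule sum_mono) (use band_op_row_sq_le[of Q c B, OF c_le] in \<open>auto simp: m_def\<close>)
    also have "\<dots> = m * B\<^sup>2 * (\<Sum>(q, j)\<in>Q \<times> UNIV. \<Sum>(r, i)\<in>F. (cmod (v (r + q, j)))\<^sup>2)"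
      by (simp add: sum_distrib_left case_prod_beta sum.swap[of _ F])
    also have "\<dots> \<le> m * B\<^sup>2 * (\<Sum>(q, j)\<in>Q \<times> (UNIV :: 'n set). real CARD('n) * (l2norm v)\<^sup>2)"
      by (intro mult_left_mono sum_mono)
        (auto simp: m_def sum_sq_shift_le_l2norm_sq[OF v that])
    also have "\<dots> = (m * sqrt (real CARD('n)) * B * l2norm v)\<^sup>2"
      by (simp add: m_def card_cartesian_product power_mult_distrib power2_eq_square)
    finally show ?thesis .
  qed
  have "0 \<le> m * sqrt (real CARD('n)) * B * l2norm v"
    using \<open>0 \<le> B\<close> by (simp add: m_def l2norm_nonneg)
  from l2I_sum_sq_le[OF sums this] show "band_op Q c v \<in> l2"
    and "l2norm (band_op Q c v) \<le> real (card Q) * real CARD('n) * sqrt (real CARD('n)) * B * l2norm v"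
    by (simp_all add: m_def)
qed

lemma bounded_op_band_op:
  assumes "finite Q" and "\<And>q r i j. q \<in> Q \<Longrightarrow> cmod (c q r i j) \<le> B" and "0 \<le> B"
  shows "bounded_op (band_op Q c)"
proof -
  have "band_op Q c (\<lambda>k. u k + v k) = (\<lambda>k. band_op Q c u k + band_op Q c v k)" for u v
    unfolding band_op_def by (auto simp: distrib_left sum.distrib)
  moreover have "band_op Q c (\<lambda>k. x * v k) = (\<lambda>k. x * band_op Q c v k)" for x v
    unfolding band_op_def by (auto simp: sum_distrib_left mult.left_commute)
  ultimately show ?thesis
    unfolding bounded_op_def using band_op_l2[of Q c B, OF assms] by blast
qed

lemma opnorm_band_op:
  fixes c :: "int \<Rightarrow> int \<Rightarrow> 'n::finite \<Rightarrow> 'n \<Rightarrow> complex"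
  assumes "finite Q" and "\<And>q r i j. q \<in> Q \<Longrightarrow> cmod (c q r i j) \<le> B" and "0 \<le> B"
  shows "opnorm (band_op Q c) \<le> real (card Q) * real CARD('n) * sqrt (real CARD('n)) * B"
    and "0 \<le> opnorm (band_op Q c)"
proof -
  define K where "K = real (card Q) * real CARD('n) * sqrt (real CARD('n)) * B"
  let ?S = "{l2norm (band_op Q c v) |v. v \<in> l2 \<and> l2norm v \<le> 1}"
  have le_K: "x \<le> K" if x_in: "x \<in> ?S" for x
  proof -
    obtain v where v: "v \<in> l2" "l2norm v \<le> 1" and x: "x = l2norm (band_op Q c v)"
      using x_in by blast
    have "x \<le> K * l2norm v"
      using band_op_l2(2)[of Q c B, OF assms v(1)] x by (simp add: K_def)
    also have "\<dots> \<le> K"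
      using v(2) \<open>0 \<le> B\<close> by (simp add: K_def mult_left_le)
    finally show ?thesis .
  qed
  have "band_op Q c (\<lambda>_. 0) = (\<lambda>_. 0)"
    by (simp add: band_op_def fun_eq_iff)
  then have zero: "0 \<in> ?S"
    using zero_in_l2 l2norm_zero by force
  show "opnorm (band_op Q c) \<le> K"
    unfolding opnorm_def by (rule cSup_least) (use zero le_K in auto)
  have "bdd_above ?S"
    by (rule bdd_aboveI[where M = K]) (rule le_K)
  then show "0 \<le> opnorm (band_op Q c)"
    unfolding opnorm_def by (rule cSup_upper[OF zero])
qed

lemma band_op_diff:
  "(\<lambda>v k. band_op Q c v k - band_op Q d v k) = band_op Q (\<lambda>q r i j. c q r i j - d q r i j)"
  unfolding band_op_def by (auto simp: fun_eq_iff left_diff_distrib sum_subtractf)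

lemma band_op_basisv_eq_0:
  assumes Q: "Q \<subseteq> {-int N..int N}"
    and c_vanish: "\<And>q r i j. q \<in> Q \<Longrightarrow> int N < \<bar>r\<bar> \<Longrightarrow> c q r i j = 0"
    and p: "2 * int N < \<bar>p\<bar>"
  shows "band_op Q c (basisv (p, j)) = (\<lambda>_. 0)"
proof -
  have "c q r i j' * basisv (p, j) (r + q, j') = 0" if "q \<in> Q" for q r i j'
  proof (cases "int N < \<bar>r\<bar>")
    case False
    moreover have "q \<in> {-int N..int N}"
      using Q that by blast
    ultimately have "r + q \<noteq> p"
      using p by auto
    then show ?thesis
      by (simp add: basisv_def)
  qed (simp add: c_vanish[OF that])
  then show ?thesis
    by (auto simp: band_op_def fun_eq_iff intro!: sum.neutral)
qed

lemma hilbert_schmidt_band_op: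
  fixes c :: "int \<Rightarrow> int \<Rightarrow> 'n::finite \<Rightarrow> 'n \<Rightarrow> complex"
  assumes Q: "Q \<subseteq> {-int N..int N}" and c_le: "\<And>q r i j. q \<in> Q \<Longrightarrow> cmod (c q r i j) \<le> B"
    and "0 \<le> B" and c_vanish: "\<And>q r i j. q \<in> Q \<Longrightarrow> int N < \<bar>r\<bar> \<Longrightarrow> c q r i j = 0"
  shows "hilbert_schmidt (band_op Q c)"
    and "hsnorm (band_op Q c) \<le> sqrt (real (card ({-2 * int N..2 * int N} \<times> (UNIV :: 'n set))))
           * (real (card Q) * real CARD('n) * sqrt (real CARD('n)) * B)"
proof -
  define K where "K = real (card Q) * real CARD('n) * sqrt (real CARD('n)) * B"
  define P where "P = {-2 * int N..2 * int N} \<times> (UNIV :: 'n set)"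
  have "finite Q" "finite P"
    using Q finite_subset by (auto simp: P_def)
  let ?f = "\<lambda>k. (l2norm (band_op Q c (basisv k)))\<^sup>2"
  have outside: "?f k = 0" if "k \<notin> P" for k
  proof -
    obtain p j where k: "k = (p, j)"
      by fastforce
    then have "2 * int N < \<bar>p\<bar>"
      using \<open>k \<notin> P\<close> by (auto simp: P_def abs_le_iff)
    then show ?thesis
      unfolding k using band_op_basisv_eq_0[of Q N c, OF Q c_vanish] by (simp add: l2norm_zero)
  qed
  have le_K: "l2norm (band_op Q c (basisv k)) \<le> K" for k
    using band_op_l2(2)[of Q c B, OF \<open>finite Q\<close> c_le \<open>0 \<le> B\<close> basisv_in_l2] by (simp add: K_def l2norm_basisv)
  have "?f summable_on UNIV \<longleftrightarrow> ?f summable_on P"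
    by (rule summable_on_cong_neutral) (use outside in auto)
  then show "hilbert_schmidt (band_op Q c)"
    unfolding hilbert_schmidt_def using \<open>finite P\<close> by simp
  have "infsum ?f UNIV = sum ?f P"
    using infsum_cong_neutral[of UNIV P ?f ?f] outside \<open>finite P\<close> by auto
  also have "\<dots> \<le> real (card P) * K\<^sup>2"
    using sum_bounded_above[of P ?f "K\<^sup>2"] le_K l2norm_nonneg by (metis power_mono)
  finally have "hsnorm (band_op Q c) \<le> sqrt (real (card P) * K\<^sup>2)"
    unfolding hsnorm_def by (rule real_sqrt_le_mono)
  also have "\<dots> = sqrt (real (card P)) * K"
    using \<open>0 \<le> B\<close> by (simp add: K_def real_sqrt_mult)
  finally show "hsnorm (band_op Q c) \<le> sqrt (real (card ({-2 * int N..2 * int N} \<times> (UNIV :: 'n set))))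
           * (real (card Q) * real CARD('n) * sqrt (real CARD('n)) * B)"
    by (simp add: P_def K_def)
qed

definition jsign :: "int \<Rightarrow> complex" where
  "jsign p = (if 0 \<le> p then - \<i> else \<i>)"

lemma commJ_band_op:
  "commJ (band_op Q c) = band_op Q (\<lambda>q r i j. c q r i j * (jsign (r + q) - jsign r))"
proof -
  have "Jop v = (\<lambda>(p, i). jsign p * v (p, i))" for v :: "'a vect"
    unfolding Jop_def jsign_def by auto
  then show ?thesis
    unfolding commJ_def band_op_def
    by (auto simp: fun_eq_iff sum_distrib_left sum_subtractf algebra_simps)
qed

text \<open>\<open>J\<close> commutes with a band operator except in the rows \<open>r\<close> where \<open>r\<close> and \<open>r + q\<close> lie on
  different sides of \<open>0\<close>; there are only finitely many of them.\<close>
lemma hilbert_schmidt_commJ_band_op: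
  fixes c :: "int \<Rightarrow> int \<Rightarrow> 'n::finite \<Rightarrow> 'n \<Rightarrow> complex"
  assumes Q: "Q \<subseteq> {-int N..int N}" and c_le: "\<And>q r i j. q \<in> Q \<Longrightarrow> cmod (c q r i j) \<le> B"
    and "0 \<le> B"
  shows "hilbert_schmidt (commJ (band_op Q c))"
    and "hsnorm (commJ (band_op Q c)) \<le> sqrt (real (card ({-2 * int N..2 * int N} \<times> (UNIV :: 'n set))))
           * (real (card Q) * real CARD('n) * sqrt (real CARD('n)) * (2 * B))"
proof -
  have le: "cmod (c q r i j * (jsign (r + q) - jsign r)) \<le> 2 * B" if "q \<in> Q" for q r i j
  proof -
    have "cmod (jsign (r + q) - jsign r) \<le> 2"
      using norm_triangle_ineq4[of "jsign (r + q)" "jsign r"] by (simp add: jsign_def)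
    then show ?thesis
      using c_le[OF that, of r i j] by (simp add: norm_mult mult_mono' mult.commute)
  qed
  have vanish: "c q r i j * (jsign (r + q) - jsign r) = 0" if "q \<in> Q" "int N < \<bar>r\<bar>" for q r i j
    using Q that by (auto simp: jsign_def)
  have "0 \<le> 2 * B"
    using \<open>0 \<le> B\<close> by simp
  from hilbert_schmidt_band_op[of Q N _ "2 * B", OF Q le this vanish] show "hilbert_schmidt (commJ (band_op Q c))"
    and "hsnorm (commJ (band_op Q c)) \<le> sqrt (real (card ({-2 * int N..2 * int N} \<times> (UNIV :: 'n set))))
           * (real (card Q) * real CARD('n) * sqrt (real CARD('n)) * (2 * B))"
    unfolding commJ_band_op by simp_all
qed

lemma distJ_le_band_op:
  fixes d :: "int \<Rightarrow> int \<Rightarrow> 'n::finite \<Rightarrow> 'n \<Rightarrow> complex"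
  assumes diff: "(\<lambda>v k. F v k - G v k) = band_op {-int N..int N} d"
    and d_le: "\<And>q r i j. q \<in> {-int N..int N} \<Longrightarrow> cmod (d q r i j) \<le> B" and "0 \<le> B"
  shows "0 \<le> distJ F G"
    and "distJ F G \<le> (1 + 2 * sqrt (real (card ({-2 * int N..2 * int N} \<times> (UNIV :: 'n set)))))
           * (real (card {-int N..int N}) * real CARD('n) * sqrt (real CARD('n))) * B"
proof -
  have "finite {-int N..int N}"
    by simp
  note op = opnorm_band_op[of _ d B, OF this d_le \<open>0 \<le> B\<close>]
  note hs = hilbert_schmidt_commJ_band_op(2)[of _ N d B, OF order_refl d_le \<open>0 \<le> B\<close>]
  show "0 \<le> distJ F G"
    unfolding distJ_def diff by (intro add_nonneg_nonneg op(2) hsnorm_nonneg)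
  show "distJ F G \<le> (1 + 2 * sqrt (real (card ({-2 * int N..2 * int N} \<times> (UNIV :: 'n set)))))
           * (real (card {-int N..int N}) * real CARD('n) * sqrt (real CARD('n))) * B"
    unfolding distJ_def diff using add_mono[OF op(1) hs] by (simp add: algebra_simps)
qed

section \<open>Interpolating weights\<close>

lemma abs_exp_minus_one_le: "\<bar>exp x - 1\<bar> \<le> exp \<bar>x\<bar> - (1::real)"
  by (smt (verit) exp_ge_add_one_self one_le_exp_iff)

lemma powr_le_exp_if_abs_ln_le:
  fixes x :: real
  assumes "0 < x" and "\<bar>ln x\<bar> \<le> l" and "\<bar>s\<bar> \<le> 1"
  shows "x powr s \<le> exp l"
proof -
  have "s * ln x \<le> \<bar>s\<bar> * \<bar>ln x\<bar>"
    by (metis abs_ge_self abs_mult)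
  also have "\<dots> \<le> l"
    using assms(2,3) mult_mono[of "\<bar>s\<bar>" 1 "\<bar>ln x\<bar>" l] by simp
  finally show ?thesis
    using assms(1) by (simp add: powr_def)
qed

lemma abs_powr_diff_le:
  fixes x :: real
  assumes "0 < x" and ln_le: "\<bar>ln x\<bar> \<le> l" and "\<bar>s0\<bar> \<le> 1"
  shows "\<bar>x powr s - x powr s0\<bar> \<le> exp l * (exp (\<bar>s - s0\<bar> * l) - 1)"
proof -
  have "x powr s = x powr s0 * exp ((s - s0) * ln x)"
    using assms(1) by (simp add: powr_def exp_add[symmetric] algebra_simps)
  then have "\<bar>x powr s - x powr s0\<bar> = \<bar>x powr s0 * (exp ((s - s0) * ln x) - 1)\<bar>"
    by (simp add: right_diff_distrib)
  also have "\<dots> = x powr s0 * \<bar>exp ((s - s0) * ln x) - 1\<bar>"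
    by (simp add: abs_mult)
  also have "\<dots> \<le> exp l * (exp (\<bar>s - s0\<bar> * l) - 1)"
  proof (rule mult_mono)
    show "x powr s0 \<le> exp l"
      by (rule powr_le_exp_if_abs_ln_le) fact+
    have "\<bar>(s - s0) * ln x\<bar> \<le> \<bar>s - s0\<bar> * l"
      unfolding abs_mult by (rule mult_left_mono[OF ln_le]) simp
    then have "exp \<bar>(s - s0) * ln x\<bar> - 1 \<le> exp (\<bar>s - s0\<bar> * l) - 1"
      by simp
    then show "\<bar>exp ((s - s0) * ln x) - 1\<bar> \<le> exp (\<bar>s - s0\<bar> * l) - 1"
      using abs_exp_minus_one_le[of "(s - s0) * ln x"] by linarith
  qed simp_all
  finally show ?thesis .
qed

definition interp_weight :: "(int \<Rightarrow> real) \<Rightarrow> real \<Rightarrow> int \<Rightarrow> int \<Rightarrow> real" where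
  "interp_weight a t r q = (a r / a (r + q)) powr ((1 - t) / 2)"

lemma interp_weight_pos:
  assumes "\<And>p. 0 < a p"
  shows "0 < interp_weight a t r q"
  using assms[of r] assms[of "r + q"] by (simp add: interp_weight_def)

lemma interp_weight_0:
  assumes "\<And>p. 0 < a p"
  shows "interp_weight a 0 r q = sqrt (a r) / sqrt (a (r + q))"
  using assms[of r] assms[of "r + q"]
  by (simp add: interp_weight_def powr_half_sqrt real_sqrt_divide)

lemma interp_weight_1:
  assumes "\<And>p. 0 < a p"
  shows "interp_weight a 1 r q = 1"
  using assms[of r] assms[of "r + q"] by (simp add: interp_weight_def)

lemma interp_weight_same:
  assumes "\<And>p. 0 < a p"
  shows "interp_weight a t r 0 = 1"
  using assms[of r] by (simp add: interp_weight_def)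

lemma interp_weight_cocycle:
  assumes pos: "\<And>p. 0 < a p"
  shows "interp_weight a t r q * interp_weight a t (r + q) q' = interp_weight a t r (q + q')"
proof -
  have "a r / a (r + q) * (a (r + q) / a (r + q + q')) = a r / a (r + (q + q'))"
    using pos[of "r + q"] by (simp add: add.assoc)
  then show ?thesis
    unfolding interp_weight_def by (metis powr_mult[symmetric])
qed

lemma ratio_le_power_shift:
  fixes a :: "int \<Rightarrow> real"
  assumes pos: "\<And>p. 0 < a p" and symm: "\<And>p. a p = a (- p)" and ratio_le: "\<And>p. a p / a (p + 1) \<le> D"
  shows "a r / a (r + q) \<le> D ^ nat \<bar>q\<bar>"
proof -
  have "0 \<le> D"
    using ratio_le[of 0] pos[of 0] pos[of 1] by (smt (verit) divide_pos_pos)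
  have shift: "a s / a (s + int k) \<le> D ^ k" for s k
  proof (induction k)
    case 0
    show ?case using pos[of s] by simp
  next
    case (Suc k)
    have "a s / a (s + int (Suc k)) = a s / a (s + int k) * (a (s + int k) / a (s + int k + 1))"
      unfolding of_nat_Suc using pos[of "s + int k"] by (simp add: ac_simps)
    also have "\<dots> \<le> D ^ k * D"
      using Suc.IH ratio_le[of "s + int k"] pos \<open>0 \<le> D\<close>
      by (intro mult_mono) (auto intro: less_imp_le)
    finally show ?case by (simp add: mult.commute)
  qed
  show ?thesis
  proof (cases "0 \<le> q")
    case True
    then show ?thesis using shift[of r "nat q"] by simp
  next
    case False
    have "a r / a (r + q) = a (- r) / a (- r + int (nat \<bar>q\<bar>))"
      using False symm[of r] symm[of "r + q"] by simp
    then show ?thesis using shift[of "- r" "nat \<bar>q\<bar>"] by simp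
  qed
qed

lemma abs_ln_ratio_le:
  fixes a :: "int \<Rightarrow> real"
  assumes pos: "\<And>p. 0 < a p" and symm: "\<And>p. a p = a (- p)" and ratio_le: "\<And>p. a p / a (p + 1) \<le> D"
    and "1 \<le> D" and "\<bar>q\<bar> \<le> int N"
  shows "\<bar>ln (a r / a (r + q))\<bar> \<le> N * ln D"
proof -
  have "ln (a s / a (s + q')) \<le> N * ln D" if "\<bar>q'\<bar> \<le> int N" for s q'
  proof -
    have "ln (a s / a (s + q')) \<le> ln (D ^ nat \<bar>q'\<bar>)"
      using ratio_le_power_shift[OF pos symm ratio_le, of s q'] pos[of s] pos[of "s + q'"] \<open>1 \<le> D\<close>
      by simp
    also have "\<dots> \<le> N * ln D"
      using that \<open>1 \<le> D\<close> by (simp add: ln_realpow mult_right_mono)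
    finally show ?thesis .
  qed
  from this[of q r] this[of "- q" "r + q"] show ?thesis
    using assms(5) pos[of r] pos[of "r + q"] by (simp add: ln_div abs_le_iff)
qed

section \<open>Laurent polynomial loops\<close>

lemma infinite_unit_circle: "infinite {z::complex. cmod z = 1}"
proof -
  have "connected (sphere (0::complex) 1)"
    by (rule connected_sphere) simp
  then have "uncountable (sphere (0::complex) 1)"
    by (rule connected_uncountable[of _ 1 "- 1"]) auto
  moreover have "sphere (0::complex) 1 = {z. cmod z = 1}"
    by auto
  ultimately show ?thesis
    using countable_finite by auto
qed

lemma laurent_coeff_eq_0_if_vanishing_on_circle:
  fixes c :: "int \<Rightarrow> complex"
  assumes vanish: "\<And>z. cmod z = 1 \<Longrightarrow> (\<Sum>m\<in>{-int M..int M}. c m * z powi m) = 0"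
    and m: "m \<in> {-int M..int M}"
  shows "c m = 0"
proof -
  define p where "p = (\<Sum>m\<in>{-int M..int M}. monom (c m) (nat (m + int M)))"
  have "poly p z = 0" if z: "cmod z = 1" for z
  proof -
    have "z \<noteq> 0" using z by auto
    have "poly p z = (\<Sum>m\<in>{-int M..int M}. z ^ M * (c m * z powi m))"
      unfolding p_def poly_sum poly_monom
    proof (rule sum.cong)
      fix m assume "m \<in> {-int M..int M}"
      then have "z ^ nat (m + int M) = z powi (m + int M)"
        by (simp add: power_int_def)
      also have "\<dots> = z powi m * z ^ M"
        using \<open>z \<noteq> 0\<close> by (simp add: power_int_add)
      finally show "c m * z ^ nat (m + int M) = z ^ M * (c m * z powi m)"
        by simp
    qed simp
    also have "\<dots> = 0"
      using vanish[OF z] by (simp add: sum_distrib_left[symmetric])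
    finally show ?thesis .
  qed
  then have "{z. cmod z = 1} \<subseteq> {z. poly p z = 0}"
    by auto
  then have "p = 0"
    using poly_roots_finite infinite_unit_circle finite_subset by blast
  moreover have "coeff p (nat (m + int M)) = c m"
  proof -
    have "coeff p (nat (m + int M)) = (\<Sum>m'\<in>{-int M..int M}. if m' = m then c m' else 0)"
      unfolding p_def coeff_sum coeff_monom by (rule sum.cong) (use m in auto)
    then show ?thesis
      using m by simp
  qed
  ultimately show ?thesis by simp
qed

lemma finite_int_set_subset_interval:
  fixes S :: "int set"
  assumes "finite S"
  shows "\<exists>N. S \<subseteq> {-int N..int N}"
proof -
  obtain k where "abs ` S \<subseteq> {..k}"
    using assms finite_int_iff_bounded_le by blast
  then have "S \<subseteq> {-int (nat k)..int (nat k)}"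
    by (force simp: abs_le_iff)
  then show ?thesis ..
qed

lemma norm_matrix_entry_le: "norm (M $ i $ j) \<le> norm M"
  using Finite_Cartesian_Product.norm_nth_le[of "M $ i" j] Finite_Cartesian_Product.norm_nth_le[of M i]
  by simp

lemma loop_eval_component:
  assumes "{q. X q \<noteq> 0} \<subseteq> Q" and "finite Q"
  shows "loop_eval X z $ i $ j = (\<Sum>q\<in>Q. z powi q * X q $ i $ j)"
proof -
  have "loop_eval X z $ i $ j = (\<Sum>q\<in>{q. X q \<noteq> 0}. z powi q * X q $ i $ j)"
    unfolding loop_eval_def by simp
  also have "\<dots> = (\<Sum>q\<in>Q. z powi q * X q $ i $ j)"
    by (rule sum.mono_neutral_left) (use assms in auto)
  finally show ?thesis .
qed

lemma sum_sum_add_eq_sum_convolution: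
  fixes f :: "int \<Rightarrow> int \<Rightarrow> 'a::comm_monoid_add"
  assumes "\<And>q m. q \<in> {-int N..int N} \<Longrightarrow> m - q \<notin> {-int N..int N} \<Longrightarrow> f q m = 0"
  shows "(\<Sum>q\<in>{-int N..int N}. \<Sum>q'\<in>{-int N..int N}. f q (q + q'))
       = (\<Sum>m\<in>{-2 * int N..2 * int N}. \<Sum>q\<in>{-int N..int N}. f q m)"
proof -
  have "(\<Sum>q'\<in>{-int N..int N}. f q (q + q')) = (\<Sum>m\<in>{-2 * int N..2 * int N}. f q m)"
    if q: "q \<in> {-int N..int N}" for q
  proof -
    have "(\<Sum>q'\<in>{-int N..int N}. f q (q + q')) = (\<Sum>m\<in>{q - int N..q + int N}. f q m)"
      by (rule sum.reindex_bij_witness[of _ "\<lambda>m. m - q" "\<lambda>q'. q + q'"]) auto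
    also have "\<dots> = (\<Sum>m\<in>{-2 * int N..2 * int N}. f q m)"
      by (rule sum.mono_neutral_left) (use q assms in auto)
    finally show ?thesis .
  qed
  then have "(\<Sum>q\<in>{-int N..int N}. \<Sum>q'\<in>{-int N..int N}. f q (q + q'))
       = (\<Sum>q\<in>{-int N..int N}. \<Sum>m\<in>{-2 * int N..2 * int N}. f q m)"
    by (rule sum.cong[OF refl])
  also have "\<dots> = (\<Sum>m\<in>{-2 * int N..2 * int N}. \<Sum>q\<in>{-int N..int N}. f q m)"
    by (rule sum.swap)
  finally show ?thesis .
qed

lemma loop_eval_mult_component:
  fixes X Y :: "int \<Rightarrow> complex^'n::finite^'n"
  assumes X: "{q. X q \<noteq> 0} \<subseteq> {-int N..int N}" and Y: "{q. Y q \<noteq> 0} \<subseteq> {-int N..int N}"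
    and "z \<noteq> 0"
  shows "(loop_eval X z ** loop_eval Y z) $ i $ k
     = (\<Sum>m\<in>{-2 * int N..2 * int N}. z powi m * (\<Sum>q\<in>{-int N..int N}. (X q ** Y (m - q)) $ i $ k))"
proof -
  have "(loop_eval X z ** loop_eval Y z) $ i $ k
     = (\<Sum>j\<in>UNIV. (\<Sum>q\<in>{-int N..int N}. z powi q * X q $ i $ j) * (\<Sum>q'\<in>{-int N..int N}. z powi q' * Y q' $ j $ k))"
    unfolding matrix_matrix_mult_def using loop_eval_component[OF X] loop_eval_component[OF Y] by simp
  also have "\<dots> = (\<Sum>j\<in>UNIV. \<Sum>q\<in>{-int N..int N}. \<Sum>q'\<in>{-int N..int N}.
      z powi (q + q') * (X q $ i $ j * Y q' $ j $ k))"
    by (simp add: sum_product power_int_add \<open>z \<noteq> 0\<close> mult_ac)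
  also have "\<dots> = (\<Sum>q\<in>{-int N..int N}. \<Sum>q'\<in>{-int N..int N}. \<Sum>j\<in>UNIV.
      z powi (q + q') * (X q $ i $ j * Y q' $ j $ k))"
    by (subst sum.swap) (rule sum.cong[OF refl], rule sum.swap)
  also have "\<dots> = (\<Sum>q\<in>{-int N..int N}. \<Sum>q'\<in>{-int N..int N}. z powi (q + q') * (X q ** Y q') $ i $ k)"
    by (simp add: matrix_matrix_mult_def sum_distrib_left)
  also have "\<dots> = (\<Sum>q\<in>{-int N..int N}. \<Sum>q'\<in>{-int N..int N}.
      (\<lambda>q m. z powi m * (X q ** Y (m - q)) $ i $ k) q (q + q'))"
    by simp
  also have "\<dots> = (\<Sum>m\<in>{-2 * int N..2 * int N}. \<Sum>q\<in>{-int N..int N}. z powi m * (X q ** Y (m - q)) $ i $ k)"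
  proof (rule sum_sum_add_eq_sum_convolution)
    fix q m :: int
    assume "m - q \<notin> {-int N..int N}"
    then have "Y (m - q) = 0"
      using Y by blast
    then show "z powi m * (X q ** Y (m - q)) $ i $ k = 0"
      by (simp add: matrix_matrix_mult_def)
  qed
  finally show ?thesis
    by (simp add: sum_distrib_left)
qed

lemma loop_coeff_convolution_eq_delta:
  fixes X Y :: "int \<Rightarrow> complex^'n::finite^'n"
  assumes X: "{q. X q \<noteq> 0} \<subseteq> {-int N..int N}" and Y: "{q. Y q \<noteq> 0} \<subseteq> {-int N..int N}"
    and inverse: "\<And>z. cmod z = 1 \<Longrightarrow> loop_eval X z ** loop_eval Y z = mat 1"
    and m: "m \<in> {-2 * int N..2 * int N}"
  shows "(\<Sum>q\<in>{-int N..int N}. (X q ** Y (m - q)) $ i $ k) = (if m = 0 then mat 1 $ i $ k else 0)"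
proof -
  define c where "c m = (\<Sum>q\<in>{-int N..int N}. (X q ** Y (m - q)) $ i $ k) - (if m = 0 then mat 1 $ i $ k else 0)"
    for m
  have "(\<Sum>m\<in>{-int (2 * N)..int (2 * N)}. c m * z powi m) = 0" if z: "cmod z = 1" for z
  proof -
    have "z \<noteq> 0" using z by auto
    have "c m * z powi m = z powi m * (\<Sum>q\<in>{-int N..int N}. (X q ** Y (m - q)) $ i $ k)
        - (if m = 0 then mat 1 $ i $ k else 0)" for m
      unfolding c_def by (cases "m = 0") (simp_all add: algebra_simps)
    then have "(\<Sum>m\<in>{-int (2 * N)..int (2 * N)}. c m * z powi m)
      = (\<Sum>m\<in>{-2 * int N..2 * int N}. z powi m * (\<Sum>q\<in>{-int N..int N}. (X q ** Y (m - q)) $ i $ k))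
        - (\<Sum>m\<in>{-2 * int N..2 * int N}. if m = 0 then mat 1 $ i $ k else 0)"
      by (simp add: sum_subtractf)
    also have "\<dots> = (loop_eval X z ** loop_eval Y z) $ i $ k - mat 1 $ i $ k"
      using loop_eval_mult_component[OF X Y \<open>z \<noteq> 0\<close>] by simp
    also have "\<dots> = 0"
      using inverse[OF z] by simp
    finally show ?thesis .
  qed
  then have "c m = 0"
    by (rule laurent_coeff_eq_0_if_vanishing_on_circle) (use m in auto)
  then show ?thesis
    by (simp add: c_def)
qed

definition loop_adj :: "(int \<Rightarrow> complex^'n^'n) \<Rightarrow> int \<Rightarrow> complex^'n^'n" where
  "loop_adj A q = mat_adj (A (- q))"

lemma loop_adj_support:
  assumes "{q. A q \<noteq> 0} \<subseteq> {-int N..int N}"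
  shows "{q. loop_adj A q \<noteq> 0} \<subseteq> {-int N..int N}"
proof
  fix q assume "q \<in> {q. loop_adj A q \<noteq> 0}"
  then have "A (- q) \<noteq> 0"
    by (auto simp: loop_adj_def mat_adj_def vec_eq_iff)
  then show "q \<in> {-int N..int N}"
    using assms by force
qed

lemma cnj_power_int_unit_circle:
  assumes "cmod z = 1"
  shows "cnj (z powi q) = z powi (- q)"
proof -
  have "z * cnj z = 1"
    using complex_norm_square[of z] assms by simp
  then have "cnj z = inverse z"
    by (metis inverse_unique)
  then show ?thesis
    by (simp add: power_int_minus power_int_inverse)
qed

lemma loop_eval_loop_adj:
  fixes A :: "int \<Rightarrow> complex^'n::finite^'n"
  assumes supp: "{q. A q \<noteq> 0} \<subseteq> {-int N..int N}" and z: "cmod z = 1"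
  shows "loop_eval (loop_adj A) z = mat_adj (loop_eval A z)"
proof -
  have "loop_eval (loop_adj A) z $ i $ j = mat_adj (loop_eval A z) $ i $ j" for i j
  proof -
    have "loop_eval (loop_adj A) z $ i $ j = (\<Sum>q\<in>{-int N..int N}. z powi q * loop_adj A q $ i $ j)"
      by (rule loop_eval_component[OF loop_adj_support[OF supp]]) simp
    also have "\<dots> = (\<Sum>q\<in>{-int N..int N}. z powi q * cnj (A (- q) $ j $ i))"
      by (simp add: loop_adj_def mat_adj_def)
    also have "\<dots> = (\<Sum>q\<in>{-int N..int N}. z powi (- q) * cnj (A q $ j $ i))"
      by (rule sum.reindex_bij_witness[of _ uminus uminus]) auto
    also have "\<dots> = cnj (\<Sum>q\<in>{-int N..int N}. z powi q * A q $ j $ i)"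
      using cnj_power_int_unit_circle[OF z] by simp
    also have "\<dots> = mat_adj (loop_eval A z) $ i $ j"
      using loop_eval_component[OF supp] by (simp add: mat_adj_def)
    finally show ?thesis .
  qed
  then show ?thesis
    by (simp add: vec_eq_iff)
qed

section \<open>The homotopy\<close>

lemma band_op_weighted_comp:
  fixes X Y :: "int \<Rightarrow> complex^'n::finite^'n" and w :: "int \<Rightarrow> int \<Rightarrow> complex"
  assumes Y: "{q. Y q \<noteq> 0} \<subseteq> {-int N..int N}"
    and cocycle: "\<And>r q q'. w r q * w (r + q) q' = w r (q + q')"
  shows "band_op {-int N..int N} (\<lambda>q r i j. X q $ i $ j * w r q)
           (band_op {-int N..int N} (\<lambda>q r i j. Y q $ i $ j * w r q) v)
       = band_op {-2 * int N..2 * int N} (\<lambda>m r i k. (\<Sum>q\<in>{-int N..int N}. (X q ** Y (m - q)) $ i $ k) * w r m) v"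
proof (rule ext, clarify)
  fix r :: int and i :: 'n
  let ?Q = "{-int N..int N}"
  define g where "g q m = (\<Sum>k\<in>UNIV. (X q ** Y (m - q)) $ i $ k * w r m * v (r + m, k))" for q m
  have "band_op ?Q (\<lambda>q r i j. X q $ i $ j * w r q) (band_op ?Q (\<lambda>q r i j. Y q $ i $ j * w r q) v) (r, i)
     = (\<Sum>q\<in>?Q. \<Sum>j\<in>UNIV. X q $ i $ j * w r q *
          (\<Sum>q'\<in>?Q. \<Sum>k\<in>UNIV. Y q' $ j $ k * w (r + q) q' * v (r + q + q', k)))"
    unfolding band_op_def by simp
  also have "\<dots> = (\<Sum>q\<in>?Q. \<Sum>j\<in>UNIV. \<Sum>q'\<in>?Q. \<Sum>k\<in>UNIV.
          X q $ i $ j * Y q' $ j $ k * w r (q + q') * v (r + (q + q'), k))"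
    by (simp add: sum_distrib_left cocycle[symmetric] mult_ac add.assoc)
  also have "\<dots> = (\<Sum>q\<in>?Q. \<Sum>q'\<in>?Q. \<Sum>k\<in>UNIV. \<Sum>j\<in>UNIV.
          X q $ i $ j * Y q' $ j $ k * w r (q + q') * v (r + (q + q'), k))"
    by (rule sum.cong[OF refl], subst sum.swap, rule sum.cong[OF refl], rule sum.swap)
  also have "\<dots> = (\<Sum>q\<in>?Q. \<Sum>q'\<in>?Q. g q (q + q'))"
    unfolding g_def matrix_matrix_mult_def by (simp add: sum_distrib_right)
  also have "\<dots> = (\<Sum>m\<in>{-2 * int N..2 * int N}. \<Sum>q\<in>?Q. g q m)"
  proof (rule sum_sum_add_eq_sum_convolution)
    fix q m :: int
    assume "m - q \<notin> ?Q"
    then have "Y (m - q) = 0"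
      using Y by blast
    then show "g q m = 0"
      by (simp add: g_def matrix_matrix_mult_def)
  qed
  also have "\<dots> = band_op {-2 * int N..2 * int N}
      (\<lambda>m r i k. (\<Sum>q\<in>?Q. (X q ** Y (m - q)) $ i $ k) * w r m) v (r, i)"
    unfolding g_def band_op_def by (simp add: sum_distrib_right sum.swap[of _ ?Q])
  finally show "band_op ?Q (\<lambda>q r i j. X q $ i $ j * w r q) (band_op ?Q (\<lambda>q r i j. Y q $ i $ j * w r q) v) (r, i)
      = band_op {-2 * int N..2 * int N} (\<lambda>m r i k. (\<Sum>q\<in>?Q. (X q ** Y (m - q)) $ i $ k) * w r m) v (r, i)" .
qed

lemma band_op_delta:
  fixes w :: "int \<Rightarrow> int \<Rightarrow> complex"
  assumes "finite S" and "0 \<in> S" and "\<And>r. w r 0 = 1"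
  shows "band_op S (\<lambda>m r i k. (if m = 0 then mat 1 $ i $ k else 0) * w r m) v = (v :: 'n::finite vect)"
proof (rule ext, clarify)
  fix r :: int and i :: 'n
  have "band_op S (\<lambda>m r i k. (if m = 0 then mat 1 $ i $ k else 0) * w r m) v (r, i)
      = (\<Sum>k\<in>UNIV. \<Sum>m\<in>S. if m = 0 then mat 1 $ i $ k * v (r, k) else 0)"
    unfolding band_op_def using assms(3) by (subst sum.swap) (simp add: if_distrib[of "\<lambda>x. x * _"] cong: if_cong)
  also have "\<dots> = (\<Sum>k\<in>UNIV. mat 1 $ i $ k * v (r, k))"
    using assms(1,2) by simp
  also have "\<dots> = v (r, i)"
    by (simp add: mat_def if_distrib[of "\<lambda>x. x * _"] cong: if_cong)
  finally show "band_op S (\<lambda>m r i k. (if m = 0 then mat 1 $ i $ k else 0) * w r m) v (r, i) = v (r, i)" .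
qed

definition loop_homotopy :: "(int \<Rightarrow> real) \<Rightarrow> real \<Rightarrow> (int \<Rightarrow> complex^'n^'n) \<Rightarrow> 'n::finite oper" where
  "loop_homotopy a t A = band_op {q. A q \<noteq> 0} (\<lambda>q r i j. A q $ i $ j * complex_of_real (interp_weight a t r q))"

lemma loop_homotopy_eq_band_op:
  assumes "{q. A q \<noteq> 0} \<subseteq> Q" and "finite Q"
  shows "loop_homotopy a t A = band_op Q (\<lambda>q r i j. A q $ i $ j * complex_of_real (interp_weight a t r q))"
proof -
  have "(\<Sum>q\<in>{q. A q \<noteq> 0}. \<Sum>j\<in>UNIV. A q $ i $ j * complex_of_real (interp_weight a t r q) * v (r + q, j))
      = (\<Sum>q\<in>Q. \<Sum>j\<in>UNIV. A q $ i $ j * complex_of_real (interp_weight a t r q) * v (r + q, j))"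
    for r i and v :: "'a vect"
    by (rule sum.mono_neutral_left) (use assms in auto)
  then show ?thesis
    unfolding loop_homotopy_def band_op_def by (auto simp: fun_eq_iff)
qed

lemma loop_homotopy_0:
  assumes pos: "\<And>p. 0 < a p"
  shows "loop_homotopy a 0 A v = transported a A v"
proof -
  have "loop_homotopy a 0 A v (r, i) = transported a A v (r, i)" for r i
  proof -
    have "transported a A v (r, i) = complex_of_real (sqrt (a r)) *
       (\<Sum>q\<in>{q. A q \<noteq> 0}. \<Sum>j\<in>UNIV. A q $ i $ j * (v (r + q, j) / complex_of_real (sqrt (a (r + q)))))"
      unfolding transported_def Tiso_def Tiso_inv_def loop_op_def shift_mat_def by simp
    also have "\<dots> = (\<Sum>q\<in>{q. A q \<noteq> 0}. \<Sum>j\<in>UNIV. A q $ i $ j *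
          complex_of_real (sqrt (a r) / sqrt (a (r + q))) * v (r + q, j))"
      by (simp add: sum_distrib_left mult_ac)
    also have "\<dots> = loop_homotopy a 0 A v (r, i)"
      unfolding loop_homotopy_def band_op_def by (simp add: interp_weight_0[OF pos])
    finally show ?thesis by simp
  qed
  then show ?thesis by auto
qed

lemma loop_homotopy_1:
  assumes "\<And>p. 0 < a p"
  shows "loop_homotopy a 1 A v = loop_op A v"
  unfolding loop_homotopy_def band_op_def loop_op_def shift_mat_def
  by (auto simp: fun_eq_iff interp_weight_1[OF assms])

lemma loop_homotopy_comp_inverse:
  fixes X Y :: "int \<Rightarrow> complex^'n::finite^'n"
  assumes pos: "\<And>p. 0 < a p"
    and X: "{q. X q \<noteq> 0} \<subseteq> {-int N..int N}" and Y: "{q. Y q \<noteq> 0} \<subseteq> {-int N..int N}"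
    and inverse: "\<And>z. cmod z = 1 \<Longrightarrow> loop_eval X z ** loop_eval Y z = mat 1"
  shows "loop_homotopy a t X (loop_homotopy a t Y v) = v"
proof -
  let ?w = "\<lambda>r q. complex_of_real (interp_weight a t r q)"
  have cocycle: "?w r q * ?w (r + q) q' = ?w r (q + q')" for r q q'
    unfolding of_real_mult[symmetric] interp_weight_cocycle[OF pos] ..
  have "loop_homotopy a t X (loop_homotopy a t Y v)
      = band_op {-2 * int N..2 * int N} (\<lambda>m r i k. (\<Sum>q\<in>{-int N..int N}. (X q ** Y (m - q)) $ i $ k) * ?w r m) v"
    unfolding loop_homotopy_eq_band_op[OF X finite_atLeastAtMost_int]
      loop_homotopy_eq_band_op[OF Y finite_atLeastAtMost_int]
    by (rule band_op_weighted_comp[OF Y cocycle])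
  also have "\<dots> = band_op {-2 * int N..2 * int N} (\<lambda>m r i k. (if m = 0 then mat 1 $ i $ k else 0) * ?w r m) v"
  proof -
    have "(\<Sum>q\<in>{-int N..int N}. (X q ** Y (m - q)) $ i $ k) = (if m = 0 then mat 1 $ i $ k else 0)"
      if "m \<in> {-2 * int N..2 * int N}" for m i k
      by (rule loop_coeff_convolution_eq_delta[OF X Y inverse that])
    then show ?thesis
      unfolding band_op_def by (intro ext, clarify, intro sum.cong refl) simp
  qed
  also have "\<dots> = v"
    by (rule band_op_delta) (simp_all add: interp_weight_same[OF pos])
  finally show ?thesis .
qed

context
  fixes a :: "int \<Rightarrow> real" and D :: real
  assumes pos: "\<And>p. 0 < a p" and symm: "\<And>p. a p = a (- p)"
    and ratio_le: "\<And>p. a p / a (p + 1) \<le> D" and one_le_D: "1 \<le> D"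
begin

lemma interp_weight_le:
  assumes "t \<in> {0..1}" and "q \<in> {-int N..int N}"
  shows "interp_weight a t r q \<le> exp (N * ln D)"
  unfolding interp_weight_def
proof (rule powr_le_exp_if_abs_ln_le)
  show "0 < a r / a (r + q)"
    using pos[of r] pos[of "r + q"] by simp
  show "\<bar>ln (a r / a (r + q))\<bar> \<le> N * ln D"
    using abs_ln_ratio_le[OF pos symm ratio_le one_le_D] assms(2) by (simp add: abs_le_iff)
qed (use assms(1) in auto)

lemma abs_interp_weight_diff_le:
  assumes "t0 \<in> {0..1}" and "q \<in> {-int N..int N}"
  shows "\<bar>interp_weight a t r q - interp_weight a t0 r q\<bar>
      \<le> exp (N * ln D) * (exp (\<bar>t - t0\<bar> / 2 * (N * ln D)) - 1)"
proof -
  have eq: "\<bar>(1 - t) / 2 - (1 - t0) / 2\<bar> = \<bar>t - t0\<bar> / 2"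
    by (simp add: abs_minus_commute diff_divide_distrib[symmetric])
  have "\<bar>interp_weight a t r q - interp_weight a t0 r q\<bar>
      \<le> exp (N * ln D) * (exp (\<bar>(1 - t) / 2 - (1 - t0) / 2\<bar> * (N * ln D)) - 1)"
    unfolding interp_weight_def
  proof (rule abs_powr_diff_le)
    show "0 < a r / a (r + q)"
      using pos[of r] pos[of "r + q"] by simp
    show "\<bar>ln (a r / a (r + q))\<bar> \<le> N * ln D"
      using abs_ln_ratio_le[OF pos symm ratio_le one_le_D] assms(2) by (simp add: abs_le_iff)
  qed (use assms(1) in auto)
  then show ?thesis
    unfolding eq .
qed

lemma loop_homotopy_coeff_le:
  assumes "t \<in> {0..1}" and q: "q \<in> {-int N..int N}"
  shows "cmod (A q $ i $ j * complex_of_real (interp_weight a t r q))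
      \<le> (\<Sum>q\<in>{-int N..int N}. norm (A q)) * exp (N * ln D)"
proof -
  have "cmod (A q $ i $ j) \<le> (\<Sum>q\<in>{-int N..int N}. norm (A q))"
    using norm_matrix_entry_le[of "A q" i j] member_le_sum[of q "{-int N..int N}" "\<lambda>q. norm (A q)", OF q]
    by simp
  moreover have "0 < interp_weight a t r q"
    by (rule interp_weight_pos[where a = a, OF pos])
  ultimately show ?thesis
    using interp_weight_le[OF assms, of r]
    by (simp add: norm_mult mult_mono sum_nonneg)
qed

lemma loop_homotopy_coeff_diff_le:
  assumes t: "t \<in> {0..1}" and t0: "t0 \<in> {0..1}" and q: "q \<in> {-int N..int N}"
  shows "cmod (A q $ i $ j * complex_of_real (interp_weight a t r q)
          - A0 q $ i $ j * complex_of_real (interp_weight a t0 r q))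
      \<le> norm (A q - A0 q) * exp (N * ln D)
          + norm (A0 q) * (exp (N * ln D) * (exp (\<bar>t - t0\<bar> / 2 * (N * ln D)) - 1))"
proof -
  have "cmod (A q $ i $ j * complex_of_real (interp_weight a t r q)
          - A0 q $ i $ j * complex_of_real (interp_weight a t0 r q))
      = cmod ((A q - A0 q) $ i $ j * complex_of_real (interp_weight a t r q)
          + A0 q $ i $ j * complex_of_real (interp_weight a t r q - interp_weight a t0 r q))"
    by (simp add: algebra_simps)
  also have "\<dots> \<le> cmod ((A q - A0 q) $ i $ j) * interp_weight a t r q
      + cmod (A0 q $ i $ j) * \<bar>interp_weight a t r q - interp_weight a t0 r q\<bar>"
    by (rule order_trans[OF norm_triangle_ineq])
      (simp add: norm_mult abs_of_pos interp_weight_pos[where a = a, OF pos] flip: of_real_diff)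
  also have "\<dots> \<le> norm (A q - A0 q) * exp (N * ln D)
      + norm (A0 q) * (exp (N * ln D) * (exp (\<bar>t - t0\<bar> / 2 * (N * ln D)) - 1))"
    using interp_weight_le[OF t q] abs_interp_weight_diff_le[OF t0 q, where t = t and r = r]
      less_imp_le[OF interp_weight_pos[where a = a, OF pos]]
    by (intro add_mono mult_mono norm_matrix_entry_le) auto
  finally show ?thesis .
qed

lemma loop_homotopy_in_GLJ:
  assumes t: "t \<in> {0..1}" and A: "A \<in> LpolU"
  shows "loop_homotopy a t A \<in> GLJ"
proof -
  have "finite {q. A q \<noteq> 0}"
    using A by (simp add: LpolU_def)
  then obtain N where supp: "{q. A q \<noteq> 0} \<subseteq> {-int N..int N}"
    using finite_int_set_subset_interval by blast
  let ?Q = "{-int N..int N}"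
  have band: "loop_homotopy a t X = band_op ?Q (\<lambda>q r i j. X q $ i $ j * complex_of_real (interp_weight a t r q))"
    if "{q. X q \<noteq> 0} \<subseteq> ?Q" for X :: "int \<Rightarrow> complex^'n^'n"
    using loop_homotopy_eq_band_op[OF that] by simp
  have bounded: "bounded_op (loop_homotopy a t X)" if "{q. X q \<noteq> 0} \<subseteq> ?Q" for X :: "int \<Rightarrow> complex^'n^'n"
    unfolding band[OF that]
    by (rule bounded_op_band_op[OF _ loop_homotopy_coeff_le[OF t]]) (simp_all add: sum_nonneg)
  have unitary: "unitary_mat (loop_eval A z)" if "cmod z = 1" for z
    using A that by (simp add: LpolU_def)
  have adj_supp: "{q. loop_adj A q \<noteq> 0} \<subseteq> ?Q"
    by (rule loop_adj_support[OF supp])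
  have "loop_homotopy a t (loop_adj A) (loop_homotopy a t A v) = v" for v
    by (rule loop_homotopy_comp_inverse[OF pos adj_supp supp])
      (use unitary loop_eval_loop_adj[OF supp] in \<open>simp add: unitary_mat_def\<close>)
  moreover have "loop_homotopy a t A (loop_homotopy a t (loop_adj A) v) = v" for v
    by (rule loop_homotopy_comp_inverse[OF pos supp adj_supp])
      (use unitary loop_eval_loop_adj[OF supp] in \<open>simp add: unitary_mat_def\<close>)
  moreover have "hilbert_schmidt (commJ (loop_homotopy a t A))"
    unfolding band[OF supp]
    by (rule hilbert_schmidt_commJ_band_op(1)[OF order_refl loop_homotopy_coeff_le[OF t]]) (simp_all add: sum_nonneg)
  ultimately show ?thesis
    unfolding GLJ_def using bounded[OF supp] bounded[OF adj_supp] by blast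
qed

lemma tendsto_distJ_loop_homotopy:
  fixes A0 :: "int \<Rightarrow> complex^'n::finite^'n"
  assumes t0: "t0 \<in> {0..1}" and A0: "A0 \<in> LpolU_deg N"
  shows "((\<lambda>(t, A). distJ (loop_homotopy a t A) (loop_homotopy a t0 A0)) \<longlongrightarrow> 0)
           (at (t0, A0) within {0..1} \<times> LpolU_deg N)"
proof -
  let ?F = "at (t0, A0) within {0..1} \<times> LpolU_deg N"
  let ?Q = "{-int N..int N}"
  define L where "L = N * ln D"
  define K where "K = (1 + 2 * sqrt (real (card ({-2 * int N..2 * int N} \<times> (UNIV :: 'n set)))))
      * (real (card ?Q) * real CARD('n) * sqrt (real CARD('n)))"
  define g where "g t = exp L * (exp (\<bar>t - t0\<bar> / 2 * L) - 1)" for t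
  define B where "B x = (\<Sum>q\<in>?Q. norm (snd x q - A0 q) * exp L + norm (A0 q) * g (fst x))"
    for x :: "real \<times> (int \<Rightarrow> complex^'n^'n)"
  have "0 \<le> L"
    using one_le_D by (simp add: L_def)
  then have "0 \<le> g t" for t
    by (simp add: g_def)
  have supp: "{q. A q \<noteq> 0} \<subseteq> ?Q" if "A \<in> LpolU_deg N" for A :: "int \<Rightarrow> complex^'n^'n"
    using that by (force simp: LpolU_deg_def abs_le_iff)
  have bounds: "0 \<le> distJ (loop_homotopy a t A) (loop_homotopy a t0 A0)
      \<and> distJ (loop_homotopy a t A) (loop_homotopy a t0 A0) \<le> K * B (t, A)"
    if "(t, A) \<in> {0..1} \<times> LpolU_deg N" for t A
  proof -
    let ?d = "\<lambda>q r i j. A q $ i $ j * complex_of_real (interp_weight a t r q)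
        - A0 q $ i $ j * complex_of_real (interp_weight a t0 r q)"
    have t: "t \<in> {0..1}" and A: "A \<in> LpolU_deg N"
      using that by auto
    have diff: "(\<lambda>v k. loop_homotopy a t A v k - loop_homotopy a t0 A0 v k) = band_op ?Q ?d"
      unfolding loop_homotopy_eq_band_op[OF supp[OF A] finite_atLeastAtMost_int]
        loop_homotopy_eq_band_op[OF supp[OF A0] finite_atLeastAtMost_int]
      by (rule band_op_diff)
    have d_le: "cmod (?d q r i j) \<le> B (t, A)" if q: "q \<in> ?Q" for q r i j
    proof -
      have "cmod (?d q r i j) \<le> norm (A q - A0 q) * exp L + norm (A0 q) * g t"
        unfolding L_def g_def by (rule loop_homotopy_coeff_diff_le[OF t t0 q])
      also have "\<dots> \<le> B (t, A)"
        unfolding B_def prod.sel by (rule member_le_sum[OF q]) (use \<open>\<And>t. 0 \<le> g t\<close> in auto)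
      finally show ?thesis .
    qed
    have "0 \<le> B (t, A)"
      unfolding B_def using \<open>\<And>t. 0 \<le> g t\<close> by (intro sum_nonneg) auto
    from distJ_le_band_op[OF diff d_le this] show ?thesis
      by (simp add: K_def)
  qed
  have "eventually (\<lambda>x. x \<in> {0..1} \<times> LpolU_deg N) ?F"
    unfolding eventually_at_filter by simp
  then have lower: "eventually (\<lambda>x. 0 \<le> (\<lambda>(t, A). distJ (loop_homotopy a t A) (loop_homotopy a t0 A0)) x) ?F"
    and upper: "eventually (\<lambda>x. (\<lambda>(t, A). distJ (loop_homotopy a t A) (loop_homotopy a t0 A0)) x \<le> K * B x) ?F"
    using bounds by (auto elim!: eventually_mono)
  have ident: "((\<lambda>x. x) \<longlongrightarrow> (t0, A0)) ?F"
    by (rule tendsto_ident_at)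
  have "((\<lambda>x. fst x) \<longlongrightarrow> t0) ?F"
    using tendsto_fst[OF ident] by simp
  moreover have "((\<lambda>x. snd x q) \<longlongrightarrow> A0 q) ?F" for q
    using tendsto_snd[OF ident, simplified]
    by (rule continuous_on_tendsto_compose[OF continuous_on_product_coordinates]) auto
  ultimately have "(B \<longlongrightarrow> (\<Sum>q\<in>?Q. norm (A0 q - A0 q) * exp L + norm (A0 q) * g t0)) ?F"
    unfolding B_def g_def by (intro tendsto_intros) auto
  then have "((\<lambda>x. K * B x) \<longlongrightarrow> 0) ?F"
    by (intro tendsto_mult_right_zero) (simp add: g_def)
  then show ?thesis
    by (rule tendsto_sandwich[OF lower upper tendsto_const])
qed

end

theorem mainTheorem20:
  fixes a :: "int \<Rightarrow> real"
  assumes pos: "\<forall>p. a p > 0"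
    and rapid: "rapidly_decreasing a"
    and symm: "\<forall>p. a p = a (- p)"
    and ratio: "\<exists>C. \<forall>p. a p / a (p + 1) \<le> C"
  shows "\<exists>Hm :: real \<Rightarrow> (int \<Rightarrow> complex^'n::finite^'n) \<Rightarrow> 'n oper.
     (\<forall>t\<in>{0..1}. \<forall>A\<in>LpolU. Hm t A \<in> GLJ) \<and>
     (\<forall>A\<in>LpolU. \<forall>v\<in>l2. Hm 0 A v = transported a A v) \<and>
     (\<forall>A\<in>LpolU. \<forall>v\<in>l2. Hm 1 A v = loop_op A v) \<and>
     (\<forall>N. \<forall>t0\<in>{0..1}. \<forall>A0\<in>LpolU_deg N.
        ((\<lambda>(t, A). distJ (Hm t A) (Hm t0 A0)) \<longlongrightarrow> 0)
          (at (t0, A0) within {0..1} \<times> LpolU_deg N))"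
proof -
  obtain C where "\<forall>p. a p / a (p + 1) \<le> C"
    using ratio by blast
  then have ratio_le: "a p / a (p + 1) \<le> max C 1" for p
    by (meson max.coboundedI1)
  have "\<And>p. 0 < a p" and "\<And>p. a p = a (- p)"
    using pos symm by auto
  note weight_assms = this ratio_le max.cobounded2[of 1 C]
  show ?thesis
  proof (intro exI[of _ "loop_homotopy a"] conjI ballI allI)
    fix t :: real and A :: "int \<Rightarrow> complex^'n^'n"
    assume "t \<in> {0..1}" and "A \<in> LpolU"
    then show "loop_homotopy a t A \<in> GLJ"
      by (rule loop_homotopy_in_GLJ[OF weight_assms])
  next
    fix A :: "int \<Rightarrow> complex^'n^'n" and v
    show "loop_homotopy a 0 A v = transported a A v"
      by (rule loop_homotopy_0) (use pos in auto)
    show "loop_homotopy a 1 A v = loop_op A v"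
      by (rule loop_homotopy_1) (use pos in auto)
  next
    fix N and t0 :: real and A0 :: "int \<Rightarrow> complex^'n^'n"
    assume "t0 \<in> {0..1}" and "A0 \<in> LpolU_deg N"
    then show "((\<lambda>(t, A). distJ (loop_homotopy a t A) (loop_homotopy a t0 A0)) \<longlongrightarrow> 0)
        (at (t0, A0) within {0..1} \<times> LpolU_deg N)"
      by (rule tendsto_distJ_loop_homotopy[OF weight_assms])
  qed
qed

end
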